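(* Let $P\ge 2$. Let $\beta_1,\dots,\beta_{P-1}$ be real parameters varying in an open set, put $\beta_P:=1-\sum_{i=1}^{P-1}\beta_i$, and let $\omega_i=\omega_i(\beta_1,\dots,\beta_{P-1})$, $i=1,\dots,P$, be differentiable functions. Define $\Gamma(\kappa)=\prod_{i=1}^{P}|1-\omega_i\kappa|^{\beta_i}$. Let $\kappa_1,\dots,\kappa_{P-1}$ be differentiable functions of the $\beta$'s which are critical points of $\Gamma$, i.e. $\sum_{i=1}^P\frac{\beta_i\omega_i}{1-\kappa\,\omega_i}=0$ at $\kappa=\kappa_j$, and let $\kappa_P:=\kappa_M=2$ (a constant). Assume that $\frac{\partial}{\partial\beta_q}\Gamma(\kappa_i)=0$ for all $i=1,\dots,P$ and $q=1,\dots,P-1$ (total derivatives with respect to $\beta_q$). Assume moreover that $\omega_1,\dots,\omega_P$ are pairwise distinct and nonzero, $\beta_1,\dots,\beta_P$ are nonzero, $\kappa_1,\dots,\kappa_P$ are pairwise distinct and nonzero, and $1-\kappa_i\omega_j\neq 0$ for all $i,j$. Then for $i=1,\dots,P$ and $q=1,\dots,P-1$, $$\frac{\partial\omega_i}{\partial\beta_q}=\sum_{j=1}^{P}\frac{1-\kappa_j\omega_i}{\beta_i\kappa_j}\prod_{\substack{k=1\\k\neq j}}^{P}\frac{1-\kappa_k\omega_i}{\kappa_k-\kappa_j}\prod_{\substack{l=1\\l\neq i}}^{P}\frac{1-\kappa_j\omega_l}{\omega_l-\omega_i}\;\log\left|\frac{1-\kappa_j\omega_q}{1-\kappa_j\o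mega_P}\right|.$$
   Context: This arises in the optimization of a $P$-level Scheduled Relaxation Jacobi (SRJ) scheme: weights $\omega_i$ are applied with relative frequencies $\beta_i$, and $\Gamma(\kappa)$ is the per-iteration amplification factor, with $\kappa$ ranging over $[\kappa_m,\kappa_M]$, $\kappa_M=2$. *)

theory Defs
  imports "HOL-Analysis.Analysis"
begin

(* Index convention: the free parameters beta_1..beta_{P-1} are the coordinates of
   b :: real^'n (so CARD('n) = P-1, P >= 2 arbitrary via the type variable 'n).
   The full index set {1..P} is 'n option: Some k = index k < P, None = index P. *)

definition betaP :: "real^'n \<Rightarrow> 'n option \<Rightarrow> real" where
  "betaP b i = (case i of Some k \<Rightarrow> b $ k | None \<Rightarrow> 1 - (\<Sum>k\<in>UNIV. b $ k))"

definition Gamma :: "('n::finite option \<Rightarrow> real^'n \<Rightarrow> real) \<Rightarrow> real^'n \<Rightarrow> real \<Rightarrow> real" where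
  "Gamma \<omega> b \<kappa> = (\<Prod>i\<in>UNIV. \<bar>1 - \<omega> i b * \<kappa>\<bar> powr betaP b i)"

end

theory Submission
  imports Defs "HOL-Computational_Algebra.Polynomial"
begin

text \<open>
  Differentiating \<open>log \<Gamma>(\<kappa>\<^sub>j)\<close> along the coordinate direction \<open>q\<close> gives, for every \<open>j\<close>,
  a linear equation in the unknown derivatives \<open>\<omega>\<^sub>m'\<close>: the term containing \<open>\<kappa>\<^sub>j'\<close> drops out
  because \<open>\<kappa>\<^sub>j\<close> is a critical point of \<open>\<Gamma>\<close> (or is constant, for \<open>j = P\<close>), and the derivatives
  of the exponents \<open>\<beta>\<^sub>i\<close> contribute \<open>log |1 - \<kappa>\<^sub>j \<omega>\<^sub>q| - log |1 - \<kappa>\<^sub>j \<omega>\<^sub>P|\<close>.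
  The coefficient matrix \<open>\<beta>\<^sub>m \<kappa>\<^sub>j / (1 - \<kappa>\<^sub>j \<omega>\<^sub>m)\<close> is of Cauchy type, and its inverse
  is obtained from Lagrange interpolation at the nodes \<open>\<kappa>\<^sub>j\<close>, evaluated at \<open>1 / \<omega>\<^sub>i\<close>.
\<close>

lemma degree_prod_linear_less_card:
  fixes c d :: "'a::finite \<Rightarrow> 'b::comm_ring_1"
  shows "degree (\<Prod>k\<in>UNIV-{j}. [:c k, d k:]) < CARD('a)"
proof -
  have "degree (\<Prod>k\<in>UNIV-{j}. [:c k, d k:]) \<le> (\<Sum>k\<in>UNIV-{j}. degree [:c k, d k:])"
    using degree_prod_sum_le[of "UNIV-{j}" "\<lambda>k. [:c k, d k:]"] by (simp add: o_def)
  also have "\<dots> \<le> (\<Sum>k\<in>UNIV-{j}. 1)"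
    by (intro sum_mono) simp
  also have "\<dots> < CARD('a)"
    by (simp add: card_Diff_singleton card_gt_0_iff)
  finally show ?thesis .
qed

lemma lagrange_interpolation:
  fixes \<kappa> :: "'a::finite \<Rightarrow> 'b::field" and p :: "'b poly"
  assumes inj: "inj \<kappa>" and deg: "degree p < CARD('a)"
  shows "poly p z = (\<Sum>j\<in>UNIV. poly p (\<kappa> j) * (\<Prod>k\<in>UNIV-{j}. (z - \<kappa> k) / (\<kappa> j - \<kappa> k)))"
proof -
  define L where "L j = smult (poly p (\<kappa> j) / (\<Prod>k\<in>UNIV-{j}. \<kappa> j - \<kappa> k))
      (\<Prod>k\<in>UNIV-{j}. [:- \<kappa> k, 1:])" for j
  have poly_L:
    "poly (L j) x = poly p (\<kappa> j) * (\<Prod>k\<in>UNIV-{j}. (x - \<kappa> k) / (\<kappa> j - \<kappa> k))" for j x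
    unfolding L_def by (simp add: poly_prod prod_dividef)
  have deg_L: "degree (L j) < CARD('a)" for j
    unfolding L_def by (rule le_less_trans[OF degree_smult_le degree_prod_linear_less_card])
  have "poly (L j) (\<kappa> i) = (if j = i then poly p (\<kappa> i) else 0)" for i j
  proof (cases "j = i")
    case True
    have "(\<Prod>k\<in>UNIV-{i}. (\<kappa> i - \<kappa> k) / (\<kappa> i - \<kappa> k)) = 1"
      by (rule prod.neutral) (use inj in \<open>auto simp: inj_def\<close>)
    with True show ?thesis by (simp add: poly_L)
  next
    case False
    then have "(\<Prod>k\<in>UNIV-{j}. (\<kappa> i - \<kappa> k) / (\<kappa> j - \<kappa> k)) = 0"
      by (intro prod_zero) auto
    with False show ?thesis by (simp add: poly_L)
  qed
  then have "poly p x = poly (\<Sum>j\<in>UNIV. L j) x" if "x \<in> range \<kappa>" for x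
    using that by (auto simp: poly_sum)
  moreover have "card (range \<kappa>) = CARD('a)"
    using inj by (simp add: card_image)
  ultimately have "p = (\<Sum>j\<in>UNIV. L j)"
    using deg deg_L by (intro poly_eqI_degree[of "range \<kappa>"] degree_sum_less) auto
  then have "poly p z = (\<Sum>j\<in>UNIV. poly (L j) z)"
    by (simp only: poly_sum)
  then show ?thesis
    by (simp only: poly_L)
qed

lemma lagrange_interpolation_reciprocal:
  fixes \<kappa> :: "'a::finite \<Rightarrow> 'b::field" and p :: "'b poly"
  assumes inj: "inj \<kappa>" and deg: "degree p < CARD('a)" and "w \<noteq> 0"
  shows "(\<Sum>j\<in>UNIV. poly p (\<kappa> j) * (\<Prod>k\<in>UNIV-{j}. (1 - \<kappa> k * w) / (\<kappa> k - \<kappa> j)))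
       = (- w) ^ (CARD('a) - 1) * poly p (1 / w)"
proof -
  have "(\<Prod>k\<in>UNIV-{j}. (1 - \<kappa> k * w) / (\<kappa> k - \<kappa> j))
      = (- w) ^ (CARD('a) - 1) * (\<Prod>k\<in>UNIV-{j}. (1 / w - \<kappa> k) / (\<kappa> j - \<kappa> k))" for j
  proof -
    have "(\<Prod>k\<in>UNIV-{j}. (1 - \<kappa> k * w) / (\<kappa> k - \<kappa> j))
        = (\<Prod>k\<in>UNIV-{j}. (- w) * ((1 / w - \<kappa> k) / (\<kappa> j - \<kappa> k)))"
    proof (rule prod.cong[OF refl])
      fix k assume "k \<in> UNIV - {j}"
      then have "\<kappa> k - \<kappa> j \<noteq> 0" using inj by (auto simp: inj_def)
      with \<open>w \<noteq> 0\<close>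
      show "(1 - \<kappa> k * w) / (\<kappa> k - \<kappa> j) = (- w) * ((1 / w - \<kappa> k) / (\<kappa> j - \<kappa> k))"
        by (simp add: field_simps)
    qed
    also have "\<dots> = (- w) ^ (CARD('a) - 1) * (\<Prod>k\<in>UNIV-{j}. (1 / w - \<kappa> k) / (\<kappa> j - \<kappa> k))"
      by (simp only: prod.distrib prod_constant) (simp add: card_Diff_singleton)
    finally show ?thesis .
  qed
  then show ?thesis
    by (simp add: lagrange_interpolation[OF inj deg, of "1 / w"] sum_distrib_left ac_simps)
qed

lemma prod_one_minus_inverse_scaled:
  fixes c :: "'a::finite \<Rightarrow> 'b::field"
  assumes "w \<noteq> 0"
  shows "(- w) ^ (CARD('a) - 1) * (\<Prod>l\<in>UNIV-{m}. 1 - 1 / w * c l) = (\<Prod>l\<in>UNIV-{m}. c l - w)"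
proof -
  have "(- w) ^ (CARD('a) - 1) * (\<Prod>l\<in>UNIV-{m}. 1 - 1 / w * c l)
      = (\<Prod>l\<in>UNIV-{m}. (- w) * (1 - 1 / w * c l))"
    by (simp only: prod.distrib prod_constant) (simp add: card_Diff_singleton)
  also have "\<dots> = (\<Prod>l\<in>UNIV-{m}. c l - w)"
    using assms by (intro prod.cong) (simp_all add: field_simps)
  finally show ?thesis .
qed

lemma cauchy_like_matrix_inverse:
  fixes \<omega> \<kappa> \<beta> :: "'a::finite \<Rightarrow> real"
  assumes inj_\<omega>: "inj \<omega>" and inj_\<kappa>: "inj \<kappa>" and \<omega>_nz: "\<omega> i \<noteq> 0"
    and \<kappa>_nz: "\<And>j. \<kappa> j \<noteq> 0" and \<beta>_nz: "\<beta> i \<noteq> 0" and nondeg: "\<And>j. 1 - \<kappa> j * \<omega> m \<noteq> 0"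
  shows "(\<Sum>j\<in>UNIV. (1 - \<kappa> j * \<omega> i) / (\<beta> i * \<kappa> j)
        * (\<Prod>k\<in>UNIV - {j}. (1 - \<kappa> k * \<omega> i) / (\<kappa> k - \<kappa> j))
        * (\<Prod>l\<in>UNIV - {i}. (1 - \<kappa> j * \<omega> l) / (\<omega> l - \<omega> i))
        * (\<beta> m * \<kappa> j / (1 - \<kappa> j * \<omega> m))) = (if m = i then 1 else 0)"
proof -
  define p where "p = (\<Prod>l\<in>UNIV-{m}. [:1, - \<omega> l:])"
  define D where "D = (\<Prod>l\<in>UNIV-{i}. \<omega> l - \<omega> i)"
  define L where "L j = (\<Prod>k\<in>UNIV - {j}. (1 - \<kappa> k * \<omega> i) / (\<kappa> k - \<kappa> j))" for j
  have poly_p: "poly p x = (\<Prod>l\<in>UNIV-{m}. 1 - x * \<omega> l)" for x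
    by (simp add: p_def poly_prod)
  have deg_p: "degree p < CARD('a)"
    unfolding p_def by (rule degree_prod_linear_less_card)
  have D_nz: "D \<noteq> 0"
    using inj_\<omega> by (auto simp: D_def inj_def)
  txt \<open>Clearing denominators exhibits the \<open>j\<close>-th term as the \<open>j\<close>-th Lagrange term of
    \<open>p(x) = \<Prod>\<^sub>l\<^sub>\<noteq>\<^sub>m (1 - x \<omega>\<^sub>l)\<close> at \<open>1 / \<omega>\<^sub>i\<close>, up to a factor independent of \<open>j\<close>.\<close>
  have summand: "(1 - \<kappa> j * \<omega> i) / (\<beta> i * \<kappa> j) * L j
        * (\<Prod>l\<in>UNIV - {i}. (1 - \<kappa> j * \<omega> l) / (\<omega> l - \<omega> i))
        * (\<beta> m * \<kappa> j / (1 - \<kappa> j * \<omega> m))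
      = \<beta> m / (\<beta> i * D) * (poly p (\<kappa> j) * L j)" for j
  proof -
    have factor: "(1 - \<kappa> j * \<omega> i) * (\<Prod>l\<in>UNIV - {i}. 1 - \<kappa> j * \<omega> l)
        = (1 - \<kappa> j * \<omega> m) * poly p (\<kappa> j)"
      unfolding poly_p
      using prod.remove[of UNIV i "\<lambda>l. 1 - \<kappa> j * \<omega> l"]
        prod.remove[of UNIV m "\<lambda>l. 1 - \<kappa> j * \<omega> l"]
      by simp
    have "(1 - \<kappa> j * \<omega> i) / (\<beta> i * \<kappa> j) * L j
        * (\<Prod>l\<in>UNIV - {i}. (1 - \<kappa> j * \<omega> l) / (\<omega> l - \<omega> i))
        * (\<beta> m * \<kappa> j / (1 - \<kappa> j * \<omega> m))
      = \<beta> m / (\<beta> i * D) * L j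
        * ((1 - \<kappa> j * \<omega> i) * (\<Prod>l\<in>UNIV - {i}. 1 - \<kappa> j * \<omega> l) / (1 - \<kappa> j * \<omega> m))"
      using \<kappa>_nz[of j] by (simp add: D_def prod_dividef)
    also have "\<dots> = \<beta> m / (\<beta> i * D) * (poly p (\<kappa> j) * L j)"
      unfolding factor using nondeg[of j] by simp
    finally show ?thesis .
  qed
  have "(\<Sum>j\<in>UNIV. (1 - \<kappa> j * \<omega> i) / (\<beta> i * \<kappa> j)
        * (\<Prod>k\<in>UNIV - {j}. (1 - \<kappa> k * \<omega> i) / (\<kappa> k - \<kappa> j))
        * (\<Prod>l\<in>UNIV - {i}. (1 - \<kappa> j * \<omega> l) / (\<omega> l - \<omega> i))
        * (\<beta> m * \<kappa> j / (1 - \<kappa> j * \<omega> m)))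
      = (\<Sum>j\<in>UNIV. \<beta> m / (\<beta> i * D) * (poly p (\<kappa> j) * L j))"
    by (simp only: L_def[symmetric] summand)
  also have "\<dots> = \<beta> m / (\<beta> i * D) * (\<Prod>l\<in>UNIV-{m}. \<omega> l - \<omega> i)"
    using lagrange_interpolation_reciprocal[OF inj_\<kappa> deg_p \<omega>_nz]
      prod_one_minus_inverse_scaled[OF \<omega>_nz, of \<omega> m]
    unfolding sum_distrib_left[symmetric] by (simp add: L_def poly_p)
  also have "\<dots> = (if m = i then 1 else 0)"
    using \<beta>_nz D_nz by (auto simp: D_def intro!: prod_zero bexI[of _ i])
  finally show ?thesis .
qed

lemma sum_left_inverse_solves:
  fixes A :: "'j \<Rightarrow> 'm \<Rightarrow> 'a::comm_ring_1"
  assumes "finite J" "finite M" "i \<in> M"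
    and system: "\<And>j. j \<in> J \<Longrightarrow> (\<Sum>m\<in>M. A j m * x m) = y j"
    and left_inverse: "\<And>m. m \<in> M \<Longrightarrow> (\<Sum>j\<in>J. B j * A j m) = (if m = i then 1 else 0)"
  shows "(\<Sum>j\<in>J. B j * y j) = x i"
proof -
  have "(\<Sum>j\<in>J. B j * y j) = (\<Sum>j\<in>J. B j * (\<Sum>m\<in>M. A j m * x m))"
    by (simp add: system)
  also have "\<dots> = (\<Sum>j\<in>J. \<Sum>m\<in>M. B j * A j m * x m)"
    by (simp add: sum_distrib_left mult.assoc)
  also have "\<dots> = (\<Sum>m\<in>M. (\<Sum>j\<in>J. B j * A j m) * x m)"
    by (subst sum.swap) (simp add: sum_distrib_right)
  also have "\<dots> = (\<Sum>m\<in>M. if m = i then x m else 0)"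
    by (intro sum.cong) (simp_all add: left_inverse)
  also have "\<dots> = x i"
    using \<open>finite M\<close> \<open>i \<in> M\<close> by simp
  finally show ?thesis .
qed

lemma has_real_derivative_abs_powr:
  fixes f g :: "real \<Rightarrow> real"
  assumes f: "(f has_real_derivative f') (at x)"
    and g: "(g has_real_derivative g') (at x)"
    and nz: "f x \<noteq> 0"
  shows "((\<lambda>t. \<bar>f t\<bar> powr g t) has_real_derivative
           \<bar>f x\<bar> powr g x * (g' * ln \<bar>f x\<bar> + g x * f' / f x)) (at x)"
proof -
  define s where "s = sgn (f x)"
  have f_nhds: "(f \<longlongrightarrow> f x) (nhds x)"
    using DERIV_isCont[OF f] by (simp add: isCont_def tendsto_at_iff_tendsto_nhds)
  have "\<forall>\<^sub>F t in nhds x. s * f t > 0"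
  proof (cases "f x > 0")
    case True
    then show ?thesis using order_tendstoD(1)[OF f_nhds True] by (simp add: s_def)
  next
    case False
    with nz have "f x < 0" by simp
    then show ?thesis using order_tendstoD(2)[OF f_nhds \<open>f x < 0\<close>]
      by (auto simp: s_def elim: eventually_mono)
  qed
  then have abs_eq: "\<forall>\<^sub>F t in nhds x. \<bar>f t\<bar> = s * f t"
    by (rule eventually_mono) (auto simp: s_def sgn_if split: if_splits)
  have "((\<lambda>t. (s * f t) powr g t) has_real_derivative
          (s * f x) powr g x * (g' * ln (s * f x) + (s * f') * g x / (s * f x))) (at x)"
    using nz by (intro DERIV_powr DERIV_cmult f g) (simp add: s_def sgn_if)
  moreover have "s * f x = \<bar>f x\<bar>" by (simp add: s_def sgn_if)
  moreover have "s * f' * g x / (s * f x) = g x * f' / f x"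
    using nz by (simp add: s_def sgn_if)
  ultimately show ?thesis
    using abs_eq by (subst DERIV_cong_ev[OF refl]) (auto elim: eventually_mono)
qed

lemma has_real_derivative_prod_abs_powr:
  fixes f g :: "'i \<Rightarrow> real \<Rightarrow> real"
  assumes f: "\<And>i. i \<in> I \<Longrightarrow> (f i has_real_derivative f' i) (at x)"
    and g: "\<And>i. i \<in> I \<Longrightarrow> (g i has_real_derivative g' i) (at x)"
    and nz: "\<And>i. i \<in> I \<Longrightarrow> f i x \<noteq> 0"
  shows "((\<lambda>t. \<Prod>i\<in>I. \<bar>f i t\<bar> powr g i t) has_real_derivative
           (\<Prod>i\<in>I. \<bar>f i x\<bar> powr g i x)
           * (\<Sum>i\<in>I. g' i * ln \<bar>f i x\<bar> + g i x * f' i / f i x)) (at x)"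
proof -
  have "((\<lambda>t. \<Prod>i\<in>I. \<bar>f i t\<bar> powr g i t) has_real_derivative
          (\<Prod>i\<in>I. \<bar>f i x\<bar> powr g i x) *
          (\<Sum>i\<in>I. \<bar>f i x\<bar> powr g i x * (g' i * ln \<bar>f i x\<bar> + g i x * f' i / f i x)
                     / \<bar>f i x\<bar> powr g i x)) (at x)"
    using nz by (intro has_field_derivative_prod' has_real_derivative_abs_powr f g) auto
  moreover have "\<bar>f i x\<bar> powr g i x \<noteq> 0" if "i \<in> I" for i
    using nz[OF that] by simp
  ultimately show ?thesis by (simp cong: sum.cong)
qed

lemma has_real_derivative_along_line:
  fixes g :: "'a::real_normed_vector \<Rightarrow> real"
  assumes "(g has_derivative g') (at b)"
  shows "((\<lambda>t. g (b + t *\<^sub>R v)) has_real_derivative g' v) (at 0)"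
proof -
  have "((\<lambda>t. b + t *\<^sub>R v) has_derivative (\<lambda>t. t *\<^sub>R v)) (at 0)"
    by (auto intro!: derivative_eq_intros)
  from diff_chain_at[OF this] assms
  have "((\<lambda>t. g (b + t *\<^sub>R v)) has_derivative (\<lambda>t. g' (t *\<^sub>R v))) (at 0)"
    by (simp add: o_def)
  moreover have "g' (t *\<^sub>R v) = t * g' v" for t
    using linear_cmul[OF has_derivative_linear[OF assms]] by simp
  ultimately show ?thesis by (simp add: has_field_derivative_def mult.commute[of _ "g' v"])
qed

lemma has_real_derivative_along_line_locally_constant:
  fixes g :: "'a::real_normed_vector \<Rightarrow> real"
  assumes "open U" "b \<in> U" "\<And>x. x \<in> U \<Longrightarrow> g x = c"
  shows "((\<lambda>t. g (b + t *\<^sub>R v)) has_real_derivative 0) (at 0)"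
proof -
  have "isCont (\<lambda>t. b + t *\<^sub>R v) 0"
    by (intro continuous_intros)
  then have "((\<lambda>t. b + t *\<^sub>R v) \<longlongrightarrow> b) (nhds 0)"
    using tendsto_at_iff_tendsto_nhds[of "\<lambda>t. b + t *\<^sub>R v" 0] by (simp add: isCont_def)
  then have "\<forall>\<^sub>F t in nhds 0. b + t *\<^sub>R v \<in> U"
    using assms(1,2) by (rule topological_tendstoD)
  then have "\<forall>\<^sub>F t in nhds 0. g (b + t *\<^sub>R v) = c"
    by (rule eventually_mono) (use assms(3) in auto)
  then show ?thesis
    by (subst DERIV_cong_ev[OF refl _ refl]) auto
qed

lemma has_real_derivative_betaP_line:
  "((\<lambda>t. betaP (b + t *\<^sub>R v) i) has_real_derivative
      (case i of Some k \<Rightarrow> v $ k | None \<Rightarrow> - (\<Sum>k\<in>UNIV. v $ k))) (at t)"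
  by (cases i) (auto simp: betaP_def sum.distrib sum_distrib_left[symmetric]
                     intro!: derivative_eq_intros)

lemma sum_betaP_direction:
  fixes v :: "real^'n" and c :: "'n option \<Rightarrow> real"
  shows "(\<Sum>i\<in>UNIV. (case i of Some k \<Rightarrow> v $ k | None \<Rightarrow> - (\<Sum>k\<in>UNIV. v $ k)) * c i)
       = (\<Sum>k\<in>UNIV. v $ k * (c (Some k) - c None))"
proof -
  have "(\<Sum>i\<in>UNIV. (case i of Some k \<Rightarrow> v $ k | None \<Rightarrow> - (\<Sum>k\<in>UNIV. v $ k)) * c i)
      = - (\<Sum>k\<in>UNIV. v $ k) * c None + (\<Sum>k\<in>UNIV. v $ k * c (Some k))"
    by (simp add: UNIV_option_conv sum.reindex)
  then show ?thesis by (simp add: sum_distrib_right right_diff_distrib sum_subtractf)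
qed

lemma has_real_derivative_Gamma_along_line:
  fixes \<omega> :: "'n::finite option \<Rightarrow> real^'n \<Rightarrow> real" and k :: "real^'n \<Rightarrow> real"
  assumes \<omega>': "\<And>i. ((\<lambda>t. \<omega> i (b + t *\<^sub>R v)) has_real_derivative \<omega>' i) (at 0)"
    and k': "((\<lambda>t. k (b + t *\<^sub>R v)) has_real_derivative k') (at 0)"
    and nondeg: "\<And>i. 1 - \<omega> i b * k b \<noteq> 0"
  shows "((\<lambda>t. Gamma \<omega> (b + t *\<^sub>R v) (k (b + t *\<^sub>R v))) has_real_derivative
      Gamma \<omega> b (k b) *
      (\<Sum>i\<in>UNIV. (case i of Some l \<Rightarrow> v $ l | None \<Rightarrow> - (\<Sum>l\<in>UNIV. v $ l))
           * ln \<bar>1 - \<omega> i b * k b\<bar>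
         + betaP b i * - (\<omega>' i * k b + k' * \<omega> i b) / (1 - \<omega> i b * k b))) (at 0)"
proof -
  define f where "f i t = 1 - \<omega> i (b + t *\<^sub>R v) * k (b + t *\<^sub>R v)" for i t
  have f': "(f i has_real_derivative - (\<omega>' i * k b + k' * \<omega> i b)) (at 0)" for i
    unfolding f_def using DERIV_diff[OF DERIV_const DERIV_mult[OF \<omega>' k'], of 1 i] by simp
  have "((\<lambda>t. \<Prod>i\<in>UNIV. \<bar>f i t\<bar> powr betaP (b + t *\<^sub>R v) i) has_real_derivative
          (\<Prod>i\<in>UNIV. \<bar>f i 0\<bar> powr betaP (b + 0 *\<^sub>R v) i) *
          (\<Sum>i\<in>UNIV. (case i of Some l \<Rightarrow> v $ l | None \<Rightarrow> - (\<Sum>l\<in>UNIV. v $ l))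
               * ln \<bar>f i 0\<bar>
             + betaP (b + 0 *\<^sub>R v) i * - (\<omega>' i * k b + k' * \<omega> i b) / f i 0)) (at 0)"
    by (rule has_real_derivative_prod_abs_powr[OF f' has_real_derivative_betaP_line])
       (use nondeg in \<open>simp add: f_def\<close>)
  then show ?thesis
    by (simp add: Gamma_def f_def)
qed

lemma Gamma_stationary_linear_relation:
  fixes \<omega> :: "'n::finite option \<Rightarrow> real^'n \<Rightarrow> real" and k :: "real^'n \<Rightarrow> real"
  assumes \<omega>': "\<And>i. ((\<lambda>t. \<omega> i (b + t *\<^sub>R v)) has_real_derivative \<omega>' i) (at 0)"
    and k': "((\<lambda>t. k (b + t *\<^sub>R v)) has_real_derivative k') (at 0)"
    and stationary:
      "((\<lambda>t. Gamma \<omega> (b + t *\<^sub>R v) (k (b + t *\<^sub>R v))) has_real_derivative 0) (at 0)"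
    and crit: "k' * (\<Sum>i\<in>UNIV. betaP b i * \<omega> i b / (1 - k b * \<omega> i b)) = 0"
    and nondeg: "\<And>i. 1 - k b * \<omega> i b \<noteq> 0"
  shows "(\<Sum>m\<in>UNIV. betaP b m * k b / (1 - k b * \<omega> m b) * \<omega>' m)
       = (\<Sum>q\<in>UNIV. v $ q * ln \<bar>(1 - k b * \<omega> (Some q) b) / (1 - k b * \<omega> None b)\<bar>)"
proof -
  define \<beta>' where "\<beta>' i = (case i of Some l \<Rightarrow> v $ l | None \<Rightarrow> - (\<Sum>l\<in>UNIV. v $ l))" for i
  define c where "c i = ln \<bar>1 - k b * \<omega> i b\<bar>" for i
  have nondeg': "1 - \<omega> i b * k b \<noteq> 0" for i
    using nondeg[of i] by (simp add: mult.commute)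
  have "Gamma \<omega> b (k b) \<noteq> 0"
    using nondeg' by (simp add: Gamma_def)
  with DERIV_unique[OF has_real_derivative_Gamma_along_line[OF \<omega>' k' nondeg'] stationary]
  have "(\<Sum>i\<in>UNIV. \<beta>' i * ln \<bar>1 - \<omega> i b * k b\<bar>
      + betaP b i * - (\<omega>' i * k b + k' * \<omega> i b) / (1 - \<omega> i b * k b)) = 0"
    by (simp add: \<beta>'_def)
  moreover have "\<beta>' i * ln \<bar>1 - \<omega> i b * k b\<bar>
        + betaP b i * - (\<omega>' i * k b + k' * \<omega> i b) / (1 - \<omega> i b * k b)
      = \<beta>' i * c i - betaP b i * k b / (1 - k b * \<omega> i b) * \<omega>' i
        - k' * (betaP b i * \<omega> i b / (1 - k b * \<omega> i b))" for i
    unfolding c_def by (simp add: algebra_simps add_divide_distrib diff_divide_distrib)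
  ultimately have "(\<Sum>i\<in>UNIV. \<beta>' i * c i
      - betaP b i * k b / (1 - k b * \<omega> i b) * \<omega>' i
      - k' * (betaP b i * \<omega> i b / (1 - k b * \<omega> i b))) = 0"
    by simp
  then have "(\<Sum>m\<in>UNIV. betaP b m * k b / (1 - k b * \<omega> m b) * \<omega>' m)
      = (\<Sum>i\<in>UNIV. \<beta>' i * c i)"
    using crit by (simp add: sum_subtractf sum_distrib_left)
  also have "\<dots> = (\<Sum>q\<in>UNIV. v $ q * (c (Some q) - c None))"
    unfolding \<beta>'_def by (rule sum_betaP_direction)
  finally show ?thesis
    using nondeg by (simp add: c_def abs_divide ln_div)
qed

theorem theorem1:
  fixes U :: "(real^'n::finite) set"
    and \<omega> :: "'n option \<Rightarrow> real^'n \<Rightarrow> real"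
    and \<kappa> :: "'n option \<Rightarrow> real^'n \<Rightarrow> real"
  assumes U_open: "open U"
    and \<omega>_diff: "\<And>i b. b \<in> U \<Longrightarrow> \<omega> i differentiable (at b)"
    and \<kappa>_diff: "\<And>j b. b \<in> U \<Longrightarrow> \<kappa> (Some j) differentiable (at b)"
    and \<kappa>_P: "\<And>b. b \<in> U \<Longrightarrow> \<kappa> None b = 2"
    and crit: "\<And>j b. b \<in> U \<Longrightarrow>
        (\<Sum>i\<in>UNIV. betaP b i * \<omega> i b / (1 - \<kappa> (Some j) b * \<omega> i b)) = 0"
    and dGamma: "\<And>i q b. b \<in> U \<Longrightarrow>
        ((\<lambda>t. Gamma \<omega> (b + t *\<^sub>R axis q 1) (\<kappa> i (b + t *\<^sub>R axis q 1)))
          has_real_derivative 0) (at 0)"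
    and \<omega>_inj: "\<And>b. b \<in> U \<Longrightarrow> inj (\<lambda>i. \<omega> i b)"
    and \<omega>_nz: "\<And>i b. b \<in> U \<Longrightarrow> \<omega> i b \<noteq> 0"
    and \<beta>_nz: "\<And>i b. b \<in> U \<Longrightarrow> betaP b i \<noteq> 0"
    and \<kappa>_inj: "\<And>b. b \<in> U \<Longrightarrow> inj (\<lambda>i. \<kappa> i b)"
    and \<kappa>_nz: "\<And>i b. b \<in> U \<Longrightarrow> \<kappa> i b \<noteq> 0"
    and nondeg: "\<And>i j b. b \<in> U \<Longrightarrow> 1 - \<kappa> i b * \<omega> j b \<noteq> 0"
    and b: "b \<in> U"
  shows "((\<lambda>t. \<omega> i (b + t *\<^sub>R axis q 1)) has_real_derivative
     (\<Sum>j\<in>UNIV. (1 - \<kappa> j b * \<omega> i b) / (betaP b i * \<kappa> j b)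
        * (\<Prod>k\<in>UNIV - {j}. (1 - \<kappa> k b * \<omega> i b) / (\<kappa> k b - \<kappa> j b))
        * (\<Prod>l\<in>UNIV - {i}. (1 - \<kappa> j b * \<omega> l b) / (\<omega> l b - \<omega> i b))
        * ln \<bar>(1 - \<kappa> j b * \<omega> (Some q) b) / (1 - \<kappa> j b * \<omega> None b)\<bar>)) (at 0)"
proof -
  have "\<exists>d. ((\<lambda>t. \<omega> l (b + t *\<^sub>R axis q 1)) has_real_derivative d) (at 0)" for l
    using \<omega>_diff[OF b] has_real_derivative_along_line unfolding differentiable_def by blast
  then obtain \<omega>' where
    \<omega>': "\<And>l. ((\<lambda>t. \<omega> l (b + t *\<^sub>R axis q 1)) has_real_derivative \<omega>' l) (at 0)"
    by metis
  have relation: "(\<Sum>m\<in>UNIV. betaP b m * \<kappa> j b / (1 - \<kappa> j b * \<omega> m b) * \<omega>' m)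
      = ln \<bar>(1 - \<kappa> j b * \<omega> (Some q) b) / (1 - \<kappa> j b * \<omega> None b)\<bar>" for j
  proof (cases j)
    case None
    have "((\<lambda>t. \<kappa> None (b + t *\<^sub>R axis q 1)) has_real_derivative 0) (at 0)"
      using U_open b \<kappa>_P by (rule has_real_derivative_along_line_locally_constant)
    from Gamma_stationary_linear_relation[OF \<omega>' this dGamma[OF b]] nondeg[OF b] None
    show ?thesis by (simp add: axis_def if_distrib[of "\<lambda>c. c * _"] cong: if_cong)
  next
    case (Some j')
    obtain k' where "((\<lambda>t. \<kappa> j (b + t *\<^sub>R axis q 1)) has_real_derivative k') (at 0)"
      using \<kappa>_diff[OF b] has_real_derivative_along_line Some unfolding differentiable_def by blast
    from Gamma_stationary_linear_relation[OF \<omega>' this dGamma[OF b]] crit[OF b] nondeg[OF b] Some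
    show ?thesis by (simp add: axis_def if_distrib[of "\<lambda>c. c * _"] cong: if_cong)
  qed
  have "(\<Sum>j\<in>UNIV. (1 - \<kappa> j b * \<omega> i b) / (betaP b i * \<kappa> j b)
        * (\<Prod>k\<in>UNIV - {j}. (1 - \<kappa> k b * \<omega> i b) / (\<kappa> k b - \<kappa> j b))
        * (\<Prod>l\<in>UNIV - {i}. (1 - \<kappa> j b * \<omega> l b) / (\<omega> l b - \<omega> i b))
        * ln \<bar>(1 - \<kappa> j b * \<omega> (Some q) b) / (1 - \<kappa> j b * \<omega> None b)\<bar>) = \<omega>' i"
    using \<omega>_inj[OF b] \<kappa>_inj[OF b] \<omega>_nz[OF b] \<kappa>_nz[OF b] \<beta>_nz[OF b] nondeg[OF b]
    by (intro sum_left_inverse_solves[OF _ _ _ relation cauchy_like_matrix_inverse]) auto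
  then show ?thesis
    using \<omega>'[of i] by simp
qed

end
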